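(* Let $A\bowtie^{\theta} I$ be an amalgamated Banach algebra as in the context, and assume that $A\bowtie^\theta I$ is commutative, $\sigma(A)\neq\emptyset$, and $\theta(A)I=\{\theta(a)i: a\in A, i\in I\}$ has dense linear span in $I$. Then $$\mathrm{rad}(A\bowtie^{\theta} I)=\{(a,i): a\in\mathrm{rad}\,A,\ i\in\mathrm{rad}\,I\}.$$
   Context: Let $A$ and $B$ be Banach algebras, $\theta:A\to B$ a continuous algebra homomorphism with $\|\theta\|\le 1$, and $I$ a closed two-sided ideal of $B$. The amalgamated Banach algebra $A\bowtie^{\theta} I$ is the Banach space $\{(a,i): a\in A,\ i\in I\}$ with norm $\|(a,i)\|=\|a\|+\|i\|$ and product $(a,i)\cdot(a',i')=(aa',\ \theta(a)i'+i\theta(a')+ii')$. For a commutative Banach algebra $C$, $\sigma(C)$ is the set of nonzero multiplicative linear functionals on $C$, and $\mathrm{rad}\,C=\bigcap_{\chi\in\sigma(C)}\ker\chi$ (equal to $C$ if $\sigma(C)=\emptyset$). *)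

theory Defs
  imports "HOL-Analysis.Analysis"
begin

text \<open>Complex Banach algebras (not necessarily unital) are modelled as a type of class
  banach and real_normed_algebra (completeness, real bilinear submultiplicative product)
  together with a complex scalar multiplication extending the real one.\<close>

definition complex_banach_algebra ::
  "(complex \<Rightarrow> 'a::{banach, real_normed_algebra} \<Rightarrow> 'a) \<Rightarrow> bool" where
  "complex_banach_algebra sm \<longleftrightarrow>
     (\<forall>r x. sm (complex_of_real r) x = r *\<^sub>R x) \<and>
     (\<forall>c x y. sm c (x + y) = sm c x + sm c y) \<and>
     (\<forall>c d x. sm (c + d) x = sm c x + sm d x) \<and>
     (\<forall>c d x. sm c (sm d x) = sm (c * d) x) \<and>
     (\<forall>c x y. sm c (x * y) = sm c x * y) \<and>
     (\<forall>c x y. x * sm c y = sm c (x * y)) \<and>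
     (\<forall>c x. norm (sm c x) = cmod c * norm x)"

text \<open>Nonzero multiplicative complex-linear functionals on an algebra with carrier S.
  (In a Banach algebra these are automatically continuous.)\<close>

definition is_character ::
  "'x set \<Rightarrow> ('x \<Rightarrow> 'x \<Rightarrow> 'x) \<Rightarrow> (complex \<Rightarrow> 'x \<Rightarrow> 'x) \<Rightarrow> ('x \<Rightarrow> 'x \<Rightarrow> 'x)
     \<Rightarrow> ('x \<Rightarrow> complex) \<Rightarrow> bool" where
  "is_character S add sm mul f \<longleftrightarrow>
     (\<forall>x\<in>S. \<forall>y\<in>S. f (add x y) = f x + f y) \<and>
     (\<forall>c. \<forall>x\<in>S. f (sm c x) = c * f x) \<and>
     (\<forall>x\<in>S. \<forall>y\<in>S. f (mul x y) = f x * f y) \<and>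
     (\<exists>x\<in>S. f x \<noteq> 0)"

text \<open>rad C = intersection of the kernels of all characters (= C if there are none).\<close>

definition rad_on ::
  "'x set \<Rightarrow> ('x \<Rightarrow> 'x \<Rightarrow> 'x) \<Rightarrow> (complex \<Rightarrow> 'x \<Rightarrow> 'x) \<Rightarrow> ('x \<Rightarrow> 'x \<Rightarrow> 'x) \<Rightarrow> 'x set" where
  "rad_on S add sm mul = {x\<in>S. \<forall>f. is_character S add sm mul f \<longrightarrow> f x = 0}"

definition cspan :: "(complex \<Rightarrow> 'a::real_vector \<Rightarrow> 'a) \<Rightarrow> 'a set \<Rightarrow> 'a set" where
  "cspan sm S = {x. \<exists>F c. finite F \<and> F \<subseteq> S \<and> x = (\<Sum>v\<in>F. sm (c v) v)}"

definition closed_ideal :: "(complex \<Rightarrow> 'b::{banach, real_normed_algebra} \<Rightarrow> 'b) \<Rightarrow> 'b set \<Rightarrow> bool" where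
  "closed_ideal sm I \<longleftrightarrow> closed I \<and> 0 \<in> I \<and>
     (\<forall>x\<in>I. \<forall>y\<in>I. x + y \<in> I) \<and> (\<forall>c. \<forall>x\<in>I. sm c x \<in> I) \<and>
     (\<forall>b. \<forall>x\<in>I. b * x \<in> I \<and> x * b \<in> I)"

definition contractive_alg_hom ::
  "(complex \<Rightarrow> 'a::{banach, real_normed_algebra} \<Rightarrow> 'a) \<Rightarrow> (complex \<Rightarrow> 'b::{banach, real_normed_algebra} \<Rightarrow> 'b)
     \<Rightarrow> ('a \<Rightarrow> 'b) \<Rightarrow> bool" where
  "contractive_alg_hom smA smB \<theta> \<longleftrightarrow>
     (\<forall>x y. \<theta> (x + y) = \<theta> x + \<theta> y) \<and> (\<forall>c x. \<theta> (smA c x) = smB c (\<theta> x)) \<and>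
     (\<forall>x y. \<theta> (x * y) = \<theta> x * \<theta> y) \<and> (\<forall>x. norm (\<theta> x) \<le> norm x)"

text \<open>Operations of the amalgamated algebra A \<bowtie>^\<theta> I (carrier UNIV \<times> I).\<close>

definition amal_add :: "'a::plus \<times> 'b::plus \<Rightarrow> 'a \<times> 'b \<Rightarrow> 'a \<times> 'b" where
  "amal_add p q = (fst p + fst q, snd p + snd q)"

definition amal_smul :: "(complex \<Rightarrow> 'a \<Rightarrow> 'a) \<Rightarrow> (complex \<Rightarrow> 'b \<Rightarrow> 'b) \<Rightarrow> complex \<Rightarrow> 'a \<times> 'b \<Rightarrow> 'a \<times> 'b" where
  "amal_smul smA smB c p = (smA c (fst p), smB c (snd p))"

definition amal_mult :: "('a::times \<Rightarrow> 'b::{times,plus}) \<Rightarrow> 'a \<times> 'b \<Rightarrow> 'a \<times> 'b \<Rightarrow> 'a \<times> 'b" where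
  "amal_mult \<theta> p q = (fst p * fst q, \<theta> (fst p) * snd q + snd p * \<theta> (fst q) + snd p * snd q)"

end

theory Submission
  imports Defs
begin

text \<open>Since the zero functional lies in every kernel, the radical is the joint kernel of all
  multiplicative linear functionals. A character \<chi> of the amalgam A \<bowtie> I restricts to
  multiplicative functionals a \<mapsto> \<chi>(a,0) on A and i \<mapsto> \<chi>(0,i) on I, and
  \<chi>(a,i) = \<chi>(a,0) + \<chi>(0,i); this gives one inclusion. Conversely every character g of A
  yields the character g \<circ> fst of the amalgam, and every character f of I, with f(j0) \<noteq> 0,
  extends: g(a) = f(\<theta>(a) j0) / f(j0) is multiplicative on A, and (a,i) \<mapsto> g(a) + f(i) is
  a character of the amalgam.\<close>

definition mult_linear_on ::
  "'x set \<Rightarrow> ('x \<Rightarrow> 'x \<Rightarrow> 'x) \<Rightarrow> (complex \<Rightarrow> 'x \<Rightarrow> 'x) \<Rightarrow> ('x \<Rightarrow> 'x \<Rightarrow> 'x)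
     \<Rightarrow> ('x \<Rightarrow> complex) \<Rightarrow> bool" where
  "mult_linear_on S add sm mul f \<longleftrightarrow>
     (\<forall>x\<in>S. \<forall>y\<in>S. f (add x y) = f x + f y) \<and>
     (\<forall>c. \<forall>x\<in>S. f (sm c x) = c * f x) \<and>
     (\<forall>x\<in>S. \<forall>y\<in>S. f (mul x y) = f x * f y)"

lemma is_character_iff_mult_linear_on:
  "is_character S add sm mul f \<longleftrightarrow> mult_linear_on S add sm mul f \<and> (\<exists>x\<in>S. f x \<noteq> 0)"
  unfolding is_character_def mult_linear_on_def by blast

lemma mem_rad_on_iff:
  "x \<in> rad_on S add sm mul \<longleftrightarrow> x \<in> S \<and> (\<forall>f. mult_linear_on S add sm mul f \<longrightarrow> f x = 0)"
  unfolding rad_on_def is_character_iff_mult_linear_on by blast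

lemma rad_on_mult_linear_zero:
  "x \<in> rad_on S add sm mul \<Longrightarrow> mult_linear_on S add sm mul f \<Longrightarrow> f x = 0"
  unfolding mem_rad_on_iff by blast

lemma mult_linear_on_comp:
  assumes "mult_linear_on T addT smT mulT h" and "e ` S \<subseteq> T"
    and "\<And>x y. x \<in> S \<Longrightarrow> y \<in> S \<Longrightarrow> e (add x y) = addT (e x) (e y)"
    and "\<And>c x. x \<in> S \<Longrightarrow> e (sm c x) = smT c (e x)"
    and "\<And>x y. x \<in> S \<Longrightarrow> y \<in> S \<Longrightarrow> e (mul x y) = mulT (e x) (e y)"
  shows "mult_linear_on S add sm mul (h \<circ> e)"
  using assms unfolding mult_linear_on_def image_subset_iff by simp

lemma mult_linear_on_amal_fst:
  assumes "mult_linear_on UNIV (+) smA (*) g"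
  shows "mult_linear_on (UNIV \<times> I) amal_add (amal_smul smA smB) (amal_mult \<theta>) (g \<circ> fst)"
  by (rule mult_linear_on_comp[OF assms])
    (simp_all add: amal_add_def amal_smul_def amal_mult_def)

lemma mult_linear_on_amal_left:
  assumes "mult_linear_on (UNIV \<times> I) amal_add (amal_smul smA smB) (amal_mult \<theta>) h"
    and "0 \<in> I" and "\<And>c. smB c 0 = 0"
  shows "mult_linear_on UNIV (+) smA (*) (\<lambda>a. h (a, (0::'b::ring)))"
  using mult_linear_on_comp[OF assms(1), of "\<lambda>a. (a, 0)"] assms(2,3)
  by (simp add: amal_add_def amal_smul_def amal_mult_def image_subset_iff comp_def)

lemma mult_linear_on_amal_right:
  assumes "mult_linear_on (UNIV \<times> I) amal_add (amal_smul smA smB) (amal_mult \<theta>) h"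
    and "\<And>c. smA c 0 = 0" and "\<theta> 0 = (0::'b::ring)"
  shows "mult_linear_on I (+) smB (*) (\<lambda>i. h ((0::'a::ring), i))"
  using mult_linear_on_comp[OF assms(1), of "\<lambda>i. (0, i)"] assms(2,3)
  by (simp add: amal_add_def amal_smul_def amal_mult_def image_subset_iff comp_def)

text \<open>The factorisation f(\<theta>(a) j) f(j0) = f(j) f(\<theta>(a) j0) is where \<theta>(A) must commute
  with I.\<close>

lemma mult_linear_on_ideal_induced:
  fixes f :: "'b::ring \<Rightarrow> complex" and \<theta> :: "'a::ring \<Rightarrow> 'b"
  assumes f: "mult_linear_on I (+) smB (*) f" and j0: "j0 \<in> I" "f j0 \<noteq> 0"
    and ideal: "\<And>b j. j \<in> I \<Longrightarrow> b * j \<in> I"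
    and central: "\<And>a j. j \<in> I \<Longrightarrow> \<theta> a * j = j * \<theta> a"
    and \<theta>_add: "\<And>x y. \<theta> (x + y) = \<theta> x + \<theta> y"
    and \<theta>_smul: "\<And>c x. \<theta> (smA c x) = smB c (\<theta> x)"
    and \<theta>_mult: "\<And>x y. \<theta> (x * y) = \<theta> x * \<theta> y"
    and smB_mult: "\<And>c x y. smB c (x * y) = smB c x * y"
  defines "g a \<equiv> f (\<theta> a * j0) / f j0"
  shows "mult_linear_on UNIV (+) smA (*) g" and "\<And>a j. j \<in> I \<Longrightarrow> f (\<theta> a * j) = g a * f j"
proof -
  have f_add: "\<And>x y. x \<in> I \<Longrightarrow> y \<in> I \<Longrightarrow> f (x + y) = f x + f y"
    and f_smul: "\<And>c x. x \<in> I \<Longrightarrow> f (smB c x) = c * f x"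
    and f_mult: "\<And>x y. x \<in> I \<Longrightarrow> y \<in> I \<Longrightarrow> f (x * y) = f x * f y"
    using f unfolding mult_linear_on_def by auto
  show factor: "f (\<theta> a * j) = g a * f j" if j: "j \<in> I" for a j
  proof -
    have "f (\<theta> a * j) * f j0 = f (\<theta> a * j * j0)" using f_mult ideal j j0 by simp
    also have "\<theta> a * j * j0 = j * (\<theta> a * j0)" using central[OF j] by (simp add: mult.assoc)
    also have "f \<dots> = f j * f (\<theta> a * j0)" using f_mult ideal j j0 by simp
    finally show ?thesis using j0(2) unfolding g_def by (simp add: field_simps)
  qed
  have "g (x * y) = g x * g y" for x y
    using factor[OF ideal[OF j0(1)], of x "\<theta> y"]
    unfolding g_def \<theta>_mult by (simp add: mult.assoc)
  then show "mult_linear_on UNIV (+) smA (*) g"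
    unfolding mult_linear_on_def g_def
    using f_add f_smul ideal j0(1)
    by (simp add: \<theta>_add \<theta>_smul smB_mult[symmetric] distrib_right add_divide_distrib)
qed

lemma mult_linear_on_amal_sum:
  fixes f :: "'b::ring \<Rightarrow> complex" and \<theta> :: "'a::ring \<Rightarrow> 'b"
  assumes g: "mult_linear_on UNIV (+) smA (*) g" and f: "mult_linear_on I (+) smB (*) f"
    and factor: "\<And>a j. j \<in> I \<Longrightarrow> f (\<theta> a * j) = g a * f j"
    and central: "\<And>a j. j \<in> I \<Longrightarrow> \<theta> a * j = j * \<theta> a"
    and ideal_add: "\<And>x y. x \<in> I \<Longrightarrow> y \<in> I \<Longrightarrow> x + y \<in> I"
    and ideal: "\<And>b j. j \<in> I \<Longrightarrow> b * j \<in> I \<and> j * b \<in> I"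
  shows "mult_linear_on (UNIV \<times> I) amal_add (amal_smul smA smB) (amal_mult \<theta>)
           (\<lambda>p. g (fst p) + f (snd p))"
proof -
  have f_add: "\<And>x y. x \<in> I \<Longrightarrow> y \<in> I \<Longrightarrow> f (x + y) = f x + f y"
    and f_mult: "\<And>x y. x \<in> I \<Longrightarrow> y \<in> I \<Longrightarrow> f (x * y) = f x * f y"
    using f unfolding mult_linear_on_def by auto
  have "g (a1 * a2) + f (\<theta> a1 * i2 + i1 * \<theta> a2 + i1 * i2) = (g a1 + f i1) * (g a2 + f i2)"
    if "i1 \<in> I" "i2 \<in> I" for a1 a2 i1 i2
  proof -
    have "f (\<theta> a1 * i2 + i1 * \<theta> a2 + i1 * i2)
        = f (\<theta> a1 * i2) + f (\<theta> a2 * i1) + f (i1 * i2)"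
      using that f_add ideal ideal_add central by simp
    then show ?thesis
      using that g factor f_mult unfolding mult_linear_on_def by (simp add: algebra_simps)
  qed
  then show ?thesis
    using g f unfolding mult_linear_on_def amal_add_def amal_smul_def amal_mult_def
    by (auto simp: distrib_left)
qed

lemma amal_commutative_central:
  fixes \<theta> :: "'a::ring \<Rightarrow> 'b::ring"
  assumes "\<forall>p\<in>UNIV \<times> I. \<forall>q\<in>UNIV \<times> I. amal_mult \<theta> p q = amal_mult \<theta> q p"
    and "0 \<in> I" and "j \<in> I"
  shows "\<theta> a * j = j * \<theta> a"
  using assms(1)[rule_format, of "(a, 0)" "(0, j)"] assms(2,3)
  unfolding amal_mult_def by simp

lemma rad_on_amal_fst:
  assumes "(a, i) \<in> rad_on (UNIV \<times> I) amal_add (amal_smul smA smB) (amal_mult \<theta>)"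
  shows "a \<in> rad_on UNIV (+) smA (*)"
  using rad_on_mult_linear_zero[OF assms mult_linear_on_amal_fst] by (simp add: mem_rad_on_iff)

lemma rad_on_amal_snd:
  fixes \<theta> :: "'a::ring \<Rightarrow> 'b::ring"
  assumes central: "\<And>a j. j \<in> I \<Longrightarrow> \<theta> a * j = j * \<theta> a"
    and I_add: "\<And>x y. x \<in> I \<Longrightarrow> y \<in> I \<Longrightarrow> x + y \<in> I"
    and I_ideal: "\<And>b j. j \<in> I \<Longrightarrow> b * j \<in> I \<and> j * b \<in> I"
    and \<theta>_add: "\<And>x y. \<theta> (x + y) = \<theta> x + \<theta> y"
    and \<theta>_smul: "\<And>c x. \<theta> (smA c x) = smB c (\<theta> x)"
    and \<theta>_mult: "\<And>x y. \<theta> (x * y) = \<theta> x * \<theta> y"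
    and smB_mult: "\<And>c x y. smB c (x * y) = smB c x * y"
    and rad: "(a, i) \<in> rad_on (UNIV \<times> I) amal_add (amal_smul smA smB) (amal_mult \<theta>)"
  shows "i \<in> rad_on I (+) smB (*)"
proof -
  have "f i = 0" if f: "mult_linear_on I (+) smB (*) f" and j0: "j0 \<in> I" "f j0 \<noteq> 0" for f j0
  proof -
    let ?g = "\<lambda>a. f (\<theta> a * j0) / f j0"
    have g: "mult_linear_on UNIV (+) smA (*) ?g"
      and factor: "\<And>a j. j \<in> I \<Longrightarrow> f (\<theta> a * j) = ?g a * f j"
      using mult_linear_on_ideal_induced[OF f j0 _ central \<theta>_add \<theta>_smul \<theta>_mult smB_mult]
        I_ideal by blast+
    have "?g a + f i = 0"
      using rad_on_mult_linear_zero[OF rad mult_linear_on_amal_sum[OF g f factor central I_add I_ideal]]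
      by simp
    moreover have "?g a = 0" using rad_on_mult_linear_zero[OF rad_on_amal_fst[OF rad] g] by simp
    ultimately show ?thesis by simp
  qed
  moreover have "i \<in> I" using rad by (simp add: mem_rad_on_iff)
  ultimately show ?thesis unfolding rad_on_def is_character_iff_mult_linear_on by blast
qed

lemma rad_on_amal_pair:
  fixes \<theta> :: "'a::ring \<Rightarrow> 'b::ring"
  assumes I_0: "0 \<in> I" and smA_0: "\<And>c. smA c 0 = 0" and smB_0: "\<And>c. smB c 0 = 0"
    and \<theta>_0: "\<theta> 0 = 0"
    and a_rad: "a \<in> rad_on UNIV (+) smA (*)" and i_rad: "i \<in> rad_on I (+) smB (*)"
  shows "(a, i) \<in> rad_on (UNIV \<times> I) amal_add (amal_smul smA smB) (amal_mult \<theta>)"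
proof -
  have i: "i \<in> I" using i_rad by (simp add: mem_rad_on_iff)
  have "h (a, i) = 0"
    if h: "mult_linear_on (UNIV \<times> I) amal_add (amal_smul smA smB) (amal_mult \<theta>) h" for h
  proof -
    have "h (a, i) = h (amal_add (a, 0) (0, i))" by (simp add: amal_add_def)
    also have "\<dots> = h (a, 0) + h (0, i)"
      using h I_0 i unfolding mult_linear_on_def by blast
    also have "\<dots> = 0"
      using rad_on_mult_linear_zero[OF a_rad mult_linear_on_amal_left[OF h I_0 smB_0]]
        rad_on_mult_linear_zero[OF i_rad mult_linear_on_amal_right[OF h smA_0 \<theta>_0]] by simp
    finally show ?thesis .
  qed
  then show ?thesis using i by (simp add: mem_rad_on_iff)
qed

theorem theorem5p3:
  fixes smA :: "complex \<Rightarrow> 'a::{banach, real_normed_algebra} \<Rightarrow> 'a"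
    and smB :: "complex \<Rightarrow> 'b::{banach, real_normed_algebra} \<Rightarrow> 'b"
    and \<theta> :: "'a \<Rightarrow> 'b" and I :: "'b set"
  assumes "complex_banach_algebra smA" and "complex_banach_algebra smB"
    and "contractive_alg_hom smA smB \<theta>"
    and "closed_ideal smB I"
    and "\<forall>p\<in>UNIV \<times> I. \<forall>q\<in>UNIV \<times> I. amal_mult \<theta> p q = amal_mult \<theta> q p"
    and "\<exists>f. is_character UNIV (+) smA (*) f"
    and "I \<subseteq> closure (cspan smB {\<theta> a * i | a i. i \<in> I})"
  shows "rad_on (UNIV \<times> I) amal_add (amal_smul smA smB) (amal_mult \<theta>)
         = {(a, i). a \<in> rad_on UNIV (+) smA (*) \<and> i \<in> rad_on I (+) smB (*)}"
proof -
  have smA_add: "\<And>c x y. smA c (x + y) = smA c x + smA c y"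
    and smB_add: "\<And>c x y. smB c (x + y) = smB c x + smB c y"
    and smB_mult: "\<And>c x y. smB c (x * y) = smB c x * y"
    using assms(1,2) unfolding complex_banach_algebra_def by auto
  have \<theta>_add: "\<And>x y. \<theta> (x + y) = \<theta> x + \<theta> y" and \<theta>_smul: "\<And>c x. \<theta> (smA c x) = smB c (\<theta> x)"
    and \<theta>_mult: "\<And>x y. \<theta> (x * y) = \<theta> x * \<theta> y"
    using assms(3) unfolding contractive_alg_hom_def by auto
  have I_0: "0 \<in> I" and I_add: "\<And>x y. x \<in> I \<Longrightarrow> y \<in> I \<Longrightarrow> x + y \<in> I"
    and I_ideal: "\<And>b j. j \<in> I \<Longrightarrow> b * j \<in> I \<and> j * b \<in> I"
    using assms(4) unfolding closed_ideal_def by auto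
  have central: "\<And>a j. j \<in> I \<Longrightarrow> \<theta> a * j = j * \<theta> a"
    using amal_commutative_central[OF assms(5) I_0] .
  have zeros: "\<And>c. smA c 0 = 0" "\<And>c. smB c 0 = 0" "\<theta> 0 = 0"
    using smA_add[of _ 0 0] smB_add[of _ 0 0] \<theta>_add[of 0 0] by simp_all
  show ?thesis
    using rad_on_amal_fst rad_on_amal_pair[where smA = smA and smB = smB and \<theta> = \<theta>, OF I_0 zeros]
      rad_on_amal_snd[where smA = smA and smB = smB and \<theta> = \<theta>,
        OF central I_add I_ideal \<theta>_add \<theta>_smul \<theta>_mult smB_mult]
    by blast
qed

end
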